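(* Suppose the cost norm is $\|\cdot\|=\|\cdot\|_2$, and the Margin-without-intercept assumption and Boundedness hold. For agents $A_0,\dots,A_T\in\mathcal{A}$, let $(y_t,b_t)$ be generated by the projected strategic perceptron with $\mathbb{L}=\mathbb{R}^d\times\{0\}$ and $\gamma=1$ (so $b_t=0$ for all $t$). Then $$\sum_{t\in\mathcal{M}_T}L_{\mathrm{hinge}}\Big(\big(\tfrac{y_*}{d_*\|y_*\|_2},0\big);(s(A_t,y_t,0),1),\ell(A_t)\Big)\le0,$$ and consequently $|\mathcal{M}_T|\le\frac{(D+2/c)^2+1}{d_*^2}$.
   Context: Setting: $\mathcal{A}\subseteq\mathbb{R}^d$, labels $\ell(A)\in\{\pm1\}$; $\operatorname{sign}(0)=+1$; cost constant $c>0$; norm $\|\cdot\|_2$, $v(y)=y/\|y\|_2$ for $y\ne0$, $v(0)=0$. Predicted label $\hat\ell(x,y,b)=\operatorname{sign}(y^\top x+b-2\|y\|_2/c)$. Response: for $y\ne0$, $r(A,y,b)=A+(\tfrac2c-\tfrac{y^\top A+b}{\|y\|_2})v(y)$ if $0\le\tfrac{y^\top A+b}{\|y\|_2}<\tfrac2c$, else $A$. Proxy: for $y\ne0$, $s(A,y,b)=A-\tfrac{y^\top A+b}{\|y\|_2}v(y)$ if $0\le\tfrac{y^\top A+b}{\|y\|_2}<\tfrac2c$ and $\ell(A)=-1$; $=A+(\tfrac2c-\tfrac{y^\top A+b}{\|y\|_2})v(y)$ if the range condition holds and $\ell(A)=+1$; $=A$ otherwise; $r(A,0,b)=s(A,0,b)=A$.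 Margin-without-intercept assumption: $d_*:=\max_{y\ne0}\min_{A\in\mathcal{A}}\ell(A)\frac{y^\top A}{\|y\|_2}$ is attained at some $y_*\ne0$ and $d_*>0$. Boundedness: $D:=\sup_{A\in\mathcal{A}}\|A\|_2<\infty$. Hinge loss $L_{\mathrm{hinge}}(q;\xi,\ell)=\max\{0,1-\ell q^\top\xi\}$. Projected strategic perceptron with closed convex cone $\mathbb{L}$ and stepsize $\gamma$: $q_0=(y_0,b_0)=(0,0)$; for $t=0,\dots,T$: agent $A_t$ is shown $(y_t,b_t)$, responds $r(A_t,y_t,b_t)$, is predicted $\hat\ell(r(A_t,y_t,b_t),y_t,b_t)$; with $\xi_t=(s(A_t,y_t,b_t),1)$, $z_{t+1}=q_t+\gamma\ell(A_t)\xi_t$ on a mistake, else $z_{t+1}=q_t$; $q_{t+1}=(y_{t+1},b_{t+1})=\Pi_{\mathbb{L}}(z_{t+1})$. Mistake set $\mathcal{M}_T=\{t\in\{0,\dots,T\}:\hat\ell(r(A_t,y_t,b_t),y_t,b_t)\ne\ell(A_t)\}$. *)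

theory Defs
  imports "HOL-Analysis.Analysis"
begin

definition sgn0 :: "real \<Rightarrow> real" where
  "sgn0 x = (if x \<ge> 0 then 1 else -1)"

definition vdir :: "'a::euclidean_space \<Rightarrow> 'a" where
  "vdir y = (if y = 0 then 0 else y /\<^sub>R norm y)"

definition pred_label :: "real \<Rightarrow> 'a::euclidean_space \<Rightarrow> 'a \<Rightarrow> real \<Rightarrow> real" where
  "pred_label c x y b = sgn0 (y \<bullet> x + b - 2 * norm y / c)"

definition resp :: "real \<Rightarrow> 'a::euclidean_space \<Rightarrow> 'a \<Rightarrow> real \<Rightarrow> 'a" where
  "resp c A y b =
     (if y \<noteq> 0 \<and> 0 \<le> (y \<bullet> A + b) / norm y \<and> (y \<bullet> A + b) / norm y < 2 / c
      then A + (2 / c - (y \<bullet> A + b) / norm y) *\<^sub>R vdir y else A)"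

definition proxy :: "real \<Rightarrow> ('a::euclidean_space \<Rightarrow> real) \<Rightarrow> 'a \<Rightarrow> 'a \<Rightarrow> real \<Rightarrow> 'a" where
  "proxy c lab A y b =
     (if y \<noteq> 0 \<and> 0 \<le> (y \<bullet> A + b) / norm y \<and> (y \<bullet> A + b) / norm y < 2 / c
      then (if lab A = -1 then A - ((y \<bullet> A + b) / norm y) *\<^sub>R vdir y
            else if lab A = 1 then A + (2 / c - (y \<bullet> A + b) / norm y) *\<^sub>R vdir y
            else A)
      else A)"

definition hinge :: "('a::euclidean_space \<times> real) \<Rightarrow> ('a \<times> real) \<Rightarrow> real \<Rightarrow> real" where
  "hinge q \<xi> l = max 0 (1 - l * (q \<bullet> \<xi>))"

definition proj_set :: "('b::euclidean_space) set \<Rightarrow> 'b \<Rightarrow> 'b" where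
  "proj_set L z = (SOME p. p \<in> L \<and> (\<forall>w\<in>L. dist z p \<le> dist z w))"

definition is_mistake :: "real \<Rightarrow> ('a::euclidean_space \<Rightarrow> real) \<Rightarrow> 'a \<Rightarrow> 'a \<times> real \<Rightarrow> bool" where
  "is_mistake c lab A q =
     (pred_label c (resp c A (fst q) (snd q)) (fst q) (snd q) \<noteq> lab A)"

primrec perceptron ::
  "real \<Rightarrow> ('a::euclidean_space \<Rightarrow> real) \<Rightarrow> ('a \<times> real) set \<Rightarrow> real \<Rightarrow> (nat \<Rightarrow> 'a) \<Rightarrow> nat \<Rightarrow> 'a \<times> real"
where
  "perceptron c lab L \<gamma> A 0 = (0, 0)"
| "perceptron c lab L \<gamma> A (Suc t) =
     (let q = perceptron c lab L \<gamma> A t;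
          z = (if is_mistake c lab (A t) q
               then q + (\<gamma> * lab (A t)) *\<^sub>R (proxy c lab (A t) (fst q) (snd q), 1)
               else q)
      in proj_set L z)"

definition mistakes ::
  "real \<Rightarrow> ('a::euclidean_space \<Rightarrow> real) \<Rightarrow> ('a \<times> real) set \<Rightarrow> real \<Rightarrow> (nat \<Rightarrow> 'a) \<Rightarrow> nat \<Rightarrow> nat set"
where
  "mistakes c lab L \<gamma> A T = {t \<in> {0..T}. is_mistake c lab (A t) (perceptron c lab L \<gamma> A t)}"

definition margin_dir :: "'a::euclidean_space set \<Rightarrow> ('a \<Rightarrow> real) \<Rightarrow> 'a \<Rightarrow> real" where
  "margin_dir Ag lab y = (INF A\<in>Ag. lab A * (y \<bullet> A) / norm y)"

end

theory Submission imports Defs begin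

text \<open>On a mistake the proxy point \<open>s\<^sub>t\<close> never lies strictly on the correct side of the
  current hyperplane, \<open>\<ell>\<^sub>t y\<^sub>t \<bullet> s\<^sub>t \<le> 0\<close>: an agent able to move reaches the boundary and is
  predicted positive, so the only mistakes among movers are negatives, whose proxy is their
  projection onto the hyperplane. Hence the intercept-free update \<open>y\<^sub>t\<^sub>+\<^sub>1 = y\<^sub>t + \<ell>\<^sub>t s\<^sub>t\<close>
  behaves like Novikoff's perceptron on the points \<open>s\<^sub>t\<close>: each mistake adds at most
  \<open>(D + 2/c)\<^sup>2\<close> to \<open>\<parallel>y\<^sub>t\<parallel>\<^sup>2\<close> and at least \<open>d\<^sub>* \<parallel>y\<^sub>*\<parallel>\<close> to \<open>y\<^sub>* \<bullet> y\<^sub>t\<close>, because moving an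
  agent along \<open>y\<^sub>t\<close> only increases \<open>\<ell> y\<^sub>* \<bullet> A\<close> once \<open>y\<^sub>* \<bullet> y\<^sub>t \<ge> 0\<close>, which holds inductively.
  The same margin inequality makes every hinge term vanish, and Cauchy--Schwarz bounds the
  number of mistakes.\<close>

lemma proj_set_hyperplane:
  "proj_set {(y::'a::euclidean_space, b::real). b = 0} z = (fst z, 0)"
proof -
  let ?L = "{(y::'a, b::real). b = 0}"
  have dist_eq: "dist z p = sqrt ((dist (fst z) (fst p))\<^sup>2 + (dist (snd z) (snd p))\<^sup>2)" for p
    by (metis dist_Pair_Pair prod.collapse)
  show ?thesis unfolding proj_set_def
  proof (rule someI2[where a="(fst z, 0)"])
    show "(fst z, 0) \<in> ?L \<and> (\<forall>w\<in>?L. dist z (fst z, 0) \<le> dist z w)"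
      by (auto simp: dist_eq)
  next
    fix p assume p: "p \<in> ?L \<and> (\<forall>w\<in>?L. dist z p \<le> dist z w)"
    then have snd_p: "snd p = 0" by auto
    have "dist z p \<le> dist z (fst z, 0)" using p by auto
    then have "sqrt ((dist (fst z) (fst p))\<^sup>2 + (snd z)\<^sup>2) \<le> sqrt ((snd z)\<^sup>2)"
      by (simp add: dist_eq snd_p dist_real_def)
    then have "(dist (fst z) (fst p))\<^sup>2 + (snd z)\<^sup>2 \<le> (snd z)\<^sup>2"
      using real_sqrt_le_iff by blast
    then have "fst p = fst z" by simp
    then show "p = (fst z, 0)" using snd_p by (metis prod.collapse)
  qed
qed

lemma snd_perceptron_hyperplane: "snd (perceptron c lab {(y, b). b = 0} 1 A t) = 0"
  by (cases t) (simp_all add: proj_set_hyperplane Let_def)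

lemma mistake_imp_proxy_misclassified:
  fixes A y :: "'a::euclidean_space"
  assumes c: "c > 0" and l: "lab A = 1 \<or> lab A = -1"
    and mistake: "is_mistake c lab A (y, b)"
  shows "lab A * (y \<bullet> proxy c lab A y b + b) \<le> 0"
proof (cases "y = 0")
  case True
  then show ?thesis
    using mistake l
    by (auto simp: proxy_def is_mistake_def pred_label_def resp_def sgn0_def split: if_splits)
next
  case False
  define \<alpha> where "\<alpha> = (y \<bullet> A + b) / norm y"
  have ny: "norm y > 0" using False by simp
  have yv: "y \<bullet> vdir y = norm y"
    using False by (simp add: vdir_def power2_norm_eq_inner[symmetric] power2_eq_square)
  have yA: "y \<bullet> A + b = \<alpha> * norm y" using ny by (simp add: \<alpha>_def)
  let ?pred = "pred_label c (resp c A y b) y b"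
  consider (moved) "0 \<le> \<alpha>" "\<alpha> < 2 / c" | (neg) "\<alpha> < 0" | (far) "2 / c \<le> \<alpha>" by linarith
  then show ?thesis
  proof cases
    case moved
    \<comment> \<open>the agent moves exactly onto the decision boundary and is classified positive\<close>
    have "resp c A y b = A + (2 / c - \<alpha>) *\<^sub>R vdir y"
      using moved False by (simp add: resp_def \<alpha>_def)
    then have "y \<bullet> resp c A y b = y \<bullet> A + (2 / c - \<alpha>) * norm y"
      by (simp add: inner_add_right yv)
    then have "y \<bullet> resp c A y b + b - 2 * norm y / c = 0"
      using yA by (simp add: algebra_simps)
    then have "?pred = 1" by (simp add: pred_label_def sgn0_def)
    then have "lab A = -1" using mistake l by (auto simp: is_mistake_def)
    moreover have "proxy c lab A y b = A - \<alpha> *\<^sub>R vdir y"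
      using moved False \<open>lab A = -1\<close> by (simp add: proxy_def \<alpha>_def)
    ultimately show ?thesis using yA by (simp add: inner_diff_right yv)
  next
    case neg
    have stays: "resp c A y b = A" "proxy c lab A y b = A"
      using neg by (auto simp: resp_def proxy_def \<alpha>_def)
    have "\<alpha> * norm y < 0" using neg ny by (simp add: mult_neg_pos)
    moreover have "2 * norm y / c > 0" using ny c by simp
    ultimately have "?pred = -1" using yA by (simp add: pred_label_def stays sgn0_def)
    then have "lab A = 1" using mistake l by (auto simp: is_mistake_def)
    then show ?thesis using stays yA \<open>\<alpha> * norm y < 0\<close> by simp
  next
    case far
    have stays: "resp c A y b = A" "proxy c lab A y b = A"
      using far c by (auto simp: resp_def proxy_def \<alpha>_def)
    have "2 / c * norm y \<le> \<alpha> * norm y"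
      using far ny mult_right_mono[of "2 / c" \<alpha> "norm y"] by linarith
    then have "?pred = 1" using yA by (simp add: pred_label_def stays sgn0_def)
    then have "lab A = -1" using mistake l by (auto simp: is_mistake_def)
    moreover have "0 \<le> \<alpha> * norm y"
      using far c ny by (simp add: order_trans[OF _ far])
    ultimately show ?thesis using stays yA by simp
  qed
qed

lemma norm_proxy_le:
  fixes A y :: "'a::euclidean_space"
  assumes "c > 0"
  shows "norm (proxy c lab A y b) \<le> norm A + 2 / c"
proof -
  have "norm (k *\<^sub>R vdir y) \<le> \<bar>k\<bar>" for k
    by (simp add: vdir_def mult_left_le)
  then have "norm (A + k *\<^sub>R vdir y) \<le> norm A + \<bar>k\<bar>" "norm (A - k *\<^sub>R vdir y) \<le> norm A + \<bar>k\<bar>"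
    for k by (meson add_left_mono norm_triangle_ineq order_trans norm_triangle_ineq4)+
  then show ?thesis using assms unfolding proxy_def
    by (auto intro!: order_trans[OF \<open>norm (A + _ *\<^sub>R vdir y) \<le> _\<close>]
                     order_trans[OF \<open>norm (A - _ *\<^sub>R vdir y) \<le> _\<close>])
qed

lemma proxy_margin_ge:
  fixes A y u :: "'a::euclidean_space"
  assumes "lab A = 1 \<or> lab A = -1" and "u \<bullet> y \<ge> 0"
  shows "lab A * (u \<bullet> A) \<le> lab A * (u \<bullet> proxy c lab A y b)"
proof -
  have uv: "u \<bullet> vdir y \<ge> 0" using assms(2) by (simp add: vdir_def)
  have "0 \<le> (y \<bullet> A + b) * (u \<bullet> vdir y) / norm y" if "0 \<le> (y \<bullet> A + b) / norm y"
    using mult_nonneg_nonneg[OF that uv] by simp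
  then show ?thesis using assms(1) uv unfolding proxy_def
    by (auto simp: inner_add_right inner_diff_right mult_nonneg_nonneg)
qed

lemma margin_dir_mult_norm_le:
  fixes Ag :: "'a::euclidean_space set"
  assumes "bounded Ag" and lab_bound: "\<forall>X\<in>Ag. \<bar>lab X\<bar> \<le> 1"
    and "y \<noteq> 0" and "X \<in> Ag"
  shows "margin_dir Ag lab y * norm y \<le> lab X * (y \<bullet> X)"
proof -
  obtain B where B: "\<forall>x\<in>Ag. norm x \<le> B" using \<open>bounded Ag\<close> bounded_iff by blast
  have ny: "norm y > 0" using \<open>y \<noteq> 0\<close> by simp
  have "bdd_below ((\<lambda>A. lab A * (y \<bullet> A) / norm y) ` Ag)"
  proof (rule bdd_belowI2)
    fix x assume x: "x \<in> Ag"
    have "\<bar>lab x * (y \<bullet> x)\<bar> \<le> \<bar>y \<bullet> x\<bar>"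
      using lab_bound x by (simp add: abs_mult mult_left_le_one_le)
    also have "\<dots> \<le> norm y * B"
      using Cauchy_Schwarz_ineq2[of y x] B x ny by (meson mult_left_mono norm_ge_zero order_trans)
    finally show "- B \<le> lab x * (y \<bullet> x) / norm y"
      using ny by (simp add: abs_le_iff divide_simps mult.commute)
  qed
  then have "margin_dir Ag lab y \<le> lab X * (y \<bullet> X) / norm y"
    unfolding margin_dir_def using \<open>X \<in> Ag\<close> by (rule cINF_lower)
  then show ?thesis using ny by (simp add: pos_le_divide_eq)
qed

lemma hinge_nonpos_of_margin:
  assumes "\<delta> > 0" and "l * (u \<bullet> s) \<ge> \<delta>"
  shows "hinge (u /\<^sub>R \<delta>, 0) (s, 1) l \<le> 0"
proof -
  have "l * ((u /\<^sub>R \<delta>, 0) \<bullet> (s, 1)) = l * (u \<bullet> s) / \<delta>"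
    by (simp add: inner_Pair divide_inverse)
  also have "\<dots> \<ge> 1" using assms by simp
  finally show ?thesis by (simp add: hinge_def)
qed

lemma margin_dir_mult_norm_le_proxy:
  fixes Ag :: "'a::euclidean_space set"
  assumes "bounded Ag" and labels: "\<forall>X\<in>Ag. lab X = 1 \<or> lab X = -1"
    and "u \<noteq> 0" and "X \<in> Ag" and "u \<bullet> y \<ge> 0"
  shows "margin_dir Ag lab u * norm u \<le> lab X * (u \<bullet> proxy c lab X y b)"
proof -
  have "margin_dir Ag lab u * norm u \<le> lab X * (u \<bullet> X)"
    using labels assms by (intro margin_dir_mult_norm_le) auto
  also have "\<dots> \<le> lab X * (u \<bullet> proxy c lab X y b)"
    using labels assms by (intro proxy_margin_ge) auto
  finally show ?thesis .
qed

text \<open>Novikoff's argument, abstracted from the update rule. The gain hypothesis is only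
  required while \<open>u \<bullet> y t \<ge> 0\<close>, since that is all the strategic proxy guarantees.\<close>
lemma perceptron_mistake_invariant:
  fixes y s :: "nat \<Rightarrow> 'a::real_inner" and u :: 'a and \<delta> K :: real
  assumes y0: "y 0 = 0" and "0 \<le> \<delta>"
    and y_Suc: "\<And>t. t < n \<Longrightarrow> y (Suc t) = (if mis t then y t + s t else y t)"
    and no_progress: "\<And>t. t < n \<Longrightarrow> mis t \<Longrightarrow> y t \<bullet> s t \<le> 0"
    and step_bound: "\<And>t. t < n \<Longrightarrow> mis t \<Longrightarrow> norm (s t) \<le> K"
    and gain: "\<And>t. t < n \<Longrightarrow> mis t \<Longrightarrow> 0 \<le> u \<bullet> y t \<Longrightarrow> \<delta> \<le> u \<bullet> s t"
  shows "card {t. t < n \<and> mis t} * \<delta> \<le> u \<bullet> y n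
         \<and> (norm (y n))\<^sup>2 \<le> card {t. t < n \<and> mis t} * K\<^sup>2"
  using y_Suc no_progress step_bound gain
proof (induction n)
  case 0
  then show ?case by (simp add: y0)
next
  case (Suc n)
  let ?m = "card {t. t < n \<and> mis t}"
  have IH: "?m * \<delta> \<le> u \<bullet> y n" "(norm (y n))\<^sup>2 \<le> ?m * K\<^sup>2"
    using Suc by auto
  have mis_set: "{t. t < Suc n \<and> mis t} =
                 (if mis n then insert n {t. t < n \<and> mis t} else {t. t < n \<and> mis t})"
    by (auto simp: less_Suc_eq)
  show ?case
  proof (cases "mis n")
    case False
    then have "card {t. t < Suc n \<and> mis t} = ?m" unfolding mis_set by simp
    then show ?thesis using IH Suc.prems(1) False by simp
  next
    case True
    have card_Suc: "card {t. t < Suc n \<and> mis t} = Suc ?m"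
      unfolding mis_set using True by simp
    have "0 \<le> u \<bullet> y n"
      using IH(1) \<open>0 \<le> \<delta>\<close> by (meson mult_nonneg_nonneg of_nat_0_le_iff order_trans)
    then have "\<delta> \<le> u \<bullet> s n" using Suc.prems(4) True by simp
    then have lin: "card {t. t < Suc n \<and> mis t} * \<delta> \<le> u \<bullet> (y n + s n)"
      using IH(1) by (simp add: card_Suc inner_add_right algebra_simps)
    have "(norm (y n + s n))\<^sup>2 = (norm (y n))\<^sup>2 + 2 * (y n \<bullet> s n) + (norm (s n))\<^sup>2"
      by (simp add: power2_norm_eq_inner inner_add_left inner_add_right inner_commute)
    also have "\<dots> \<le> ?m * K\<^sup>2 + K\<^sup>2"
      using IH(2) Suc.prems(2,3)[of n] True power_mono[of "norm (s n)" K 2] by simp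
    finally have "(norm (y n + s n))\<^sup>2 \<le> card {t. t < Suc n \<and> mis t} * K\<^sup>2"
      by (simp add: card_Suc algebra_simps)
    with lin show ?thesis using True Suc.prems(1) by simp
  qed
qed

lemma mistake_count_le:
  fixes u w :: "'a::real_inner" and m \<delta> K :: real
  assumes lin: "m * \<delta> \<le> u \<bullet> w" and sq: "(norm w)\<^sup>2 \<le> m * K\<^sup>2" and "0 < \<delta>" "0 \<le> m"
  shows "m * \<delta>\<^sup>2 \<le> (norm u * K)\<^sup>2"
proof (cases "m = 0")
  case False
  then have "m > 0" using \<open>0 \<le> m\<close> by simp
  have "m * \<delta> \<le> norm u * norm w" using lin Cauchy_Schwarz_ineq2[of u w] by linarith
  then have "(m * \<delta>)\<^sup>2 \<le> (norm u)\<^sup>2 * (norm w)\<^sup>2"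
    using \<open>m > 0\<close> \<open>0 < \<delta>\<close> power_mono[of "m * \<delta>" "norm u * norm w" 2]
    by (simp add: power_mult_distrib)
  also have "\<dots> \<le> (norm u)\<^sup>2 * (m * K\<^sup>2)" using sq by (simp add: mult_left_mono)
  finally have "m * (m * \<delta>\<^sup>2) \<le> m * (norm u * K)\<^sup>2"
    by (simp add: power_mult_distrib power2_eq_square algebra_simps)
  then show ?thesis using \<open>m > 0\<close> by simp
qed simp

lemma strategic_perceptron_invariant:
  fixes Ag :: "'a::euclidean_space set" and lab :: "'a \<Rightarrow> real" and A :: "nat \<Rightarrow> 'a"
    and u :: 'a and c :: real
  defines "w \<equiv> \<lambda>t. fst (perceptron c lab {(y, b). b = 0} 1 A t)"
  assumes labels: "\<forall>X\<in>Ag. lab X = 1 \<or> lab X = -1" and c_pos: "c > 0" and "bounded Ag"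
    and "u \<noteq> 0" and margin_nonneg: "0 \<le> margin_dir Ag lab u" and agents: "\<forall>t<n. A t \<in> Ag"
  shows "card {t. t < n \<and> is_mistake c lab (A t) (w t, 0)} * (margin_dir Ag lab u * norm u)
           \<le> u \<bullet> w n
         \<and> (norm (w n))\<^sup>2
           \<le> card {t. t < n \<and> is_mistake c lab (A t) (w t, 0)} * ((SUP X\<in>Ag. norm X) + 2 / c)\<^sup>2"
proof (rule perceptron_mistake_invariant[where s = "\<lambda>t. lab (A t) *\<^sub>R proxy c lab (A t) (w t) 0"])
  have state: "perceptron c lab {(y, b). b = 0} 1 A t = (w t, 0)" for t
    using snd_perceptron_hyperplane by (simp add: w_def prod_eq_iff)
  have lab_A: "lab (A t) = 1 \<or> lab (A t) = -1" if "t < n" for t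
    using labels agents that by auto
  show "w 0 = 0" by (simp add: w_def)
  show "w (Suc t) = (if is_mistake c lab (A t) (w t, 0)
                     then w t + lab (A t) *\<^sub>R proxy c lab (A t) (w t) 0 else w t)" for t
    using state[of "Suc t"] by (auto simp: Let_def proj_set_hyperplane state split: if_splits)
  show "w t \<bullet> (lab (A t) *\<^sub>R proxy c lab (A t) (w t) 0) \<le> 0"
    if "t < n" "is_mistake c lab (A t) (w t, 0)" for t
    using mistake_imp_proxy_misclassified[of c lab "A t" "w t" 0] c_pos lab_A[OF \<open>t < n\<close>] that(2)
    by simp
  show "norm (lab (A t) *\<^sub>R proxy c lab (A t) (w t) 0) \<le> (SUP X\<in>Ag. norm X) + 2 / c"
    if "t < n" for t
  proof -
    have "norm (lab (A t) *\<^sub>R proxy c lab (A t) (w t) 0) = norm (proxy c lab (A t) (w t) 0)"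
      using lab_A[OF \<open>t < n\<close>] by auto
    also have "\<dots> \<le> norm (A t) + 2 / c" by (rule norm_proxy_le[OF c_pos])
    also have "norm (A t) \<le> (SUP X\<in>Ag. norm X)"
      using agents \<open>t < n\<close> \<open>bounded Ag\<close> by (auto intro!: cSUP_upper simp: bdd_above_norm)
    finally show ?thesis by simp
  qed
  show "margin_dir Ag lab u * norm u \<le> u \<bullet> (lab (A t) *\<^sub>R proxy c lab (A t) (w t) 0)"
    if "t < n" "0 \<le> u \<bullet> w t" for t
    using margin_dir_mult_norm_le_proxy[OF \<open>bounded Ag\<close> labels \<open>u \<noteq> 0\<close> _ that(2)] agents that(1)
    by simp
qed (use margin_nonneg in simp)

theorem mainTheorem17:
  fixes Ag :: "'a::euclidean_space set"
    and lab :: "'a \<Rightarrow> real"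
    and c dstar D :: real
    and ystar :: 'a
    and A :: "nat \<Rightarrow> 'a"
    and T :: nat
  assumes labels: "\<forall>X\<in>Ag. lab X = 1 \<or> lab X = -1"
    and c_pos: "c > 0"
    and ystar_nz: "ystar \<noteq> 0"
    and dstar_def: "dstar = margin_dir Ag lab ystar"
    and ystar_max: "\<forall>y. y \<noteq> 0 \<longrightarrow> margin_dir Ag lab y \<le> margin_dir Ag lab ystar"
    and dstar_pos: "dstar > 0"
    and bnd: "bounded Ag"
    and D_def: "D = (SUP X\<in>Ag. norm X)"
    and agents: "\<forall>t\<le>T. A t \<in> Ag"
  shows "(\<Sum>t\<in>mistakes c lab {(y, b). b = 0} 1 A T.
            hinge (ystar /\<^sub>R (dstar * norm ystar), 0)
                  (proxy c lab (A t) (fst (perceptron c lab {(y, b). b = 0} 1 A t)) 0, 1)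
                  (lab (A t))) \<le> 0
       \<and> real (card (mistakes c lab {(y, b). b = 0} 1 A T)) \<le> ((D + 2 / c)\<^sup>2 + 1) / dstar\<^sup>2"
proof -
  let ?L = "{(y::'a, b::real). b = 0}"
  define y where "y t = fst (perceptron c lab ?L 1 A t)" for t
  define mis where "mis t = is_mistake c lab (A t) (y t, 0)" for t
  define \<delta> where "\<delta> = dstar * norm ystar"
  have \<delta>_pos: "\<delta> > 0" using dstar_pos ystar_nz by (simp add: \<delta>_def)
  have invariant: "card {t. t < n \<and> mis t} * \<delta> \<le> ystar \<bullet> y n
                   \<and> (norm (y n))\<^sup>2 \<le> card {t. t < n \<and> mis t} * (D + 2 / c)\<^sup>2"
    if "n \<le> Suc T" for n
    using strategic_perceptron_invariant[OF labels c_pos bnd ystar_nz, where A = A and n = n] dstar_pos agents that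
    unfolding dstar_def D_def \<delta>_def mis_def y_def by fastforce
  have "perceptron c lab ?L 1 A t = (y t, 0)" for t
    using snd_perceptron_hyperplane by (simp add: y_def prod_eq_iff)
  then have mistakes_eq: "mistakes c lab ?L 1 A T = {t. t < Suc T \<and> mis t}"
    by (auto simp: mistakes_def mis_def)
  have "hinge (ystar /\<^sub>R \<delta>, 0) (proxy c lab (A t) (y t) 0, 1) (lab (A t)) \<le> 0"
    if "t \<le> T" for t
  proof -
    have "0 \<le> card {t'. t' < t \<and> mis t'} * \<delta>" using \<delta>_pos by simp
    then have "0 \<le> ystar \<bullet> y t" using invariant[of t] that by linarith
    then show ?thesis
      using margin_dir_mult_norm_le_proxy[OF bnd labels ystar_nz] agents that
      by (intro hinge_nonpos_of_margin[OF \<delta>_pos]) (simp add: \<delta>_def dstar_def)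
  qed
  then have hinge_sum: "(\<Sum>t\<in>mistakes c lab ?L 1 A T.
      hinge (ystar /\<^sub>R \<delta>, 0) (proxy c lab (A t) (y t) 0, 1) (lab (A t))) \<le> 0"
    by (intro sum_nonpos) (simp add: mistakes_eq)
  have "card {t. t < Suc T \<and> mis t} * \<delta>\<^sup>2 \<le> (norm ystar * (D + 2 / c))\<^sup>2"
    using invariant[of "Suc T"] \<delta>_pos by (intro mistake_count_le) auto
  then have count: "card {t. t < Suc T \<and> mis t} * dstar\<^sup>2 \<le> (D + 2 / c)\<^sup>2"
    using ystar_nz by (simp add: \<delta>_def power_mult_distrib)
  show ?thesis
    using hinge_sum count dstar_pos by (simp add: mistakes_eq y_def \<delta>_def pos_le_divide_eq)
qed

end
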